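(* Let $P=[0,1]$. No online algorithm for the all-time worst-case (ATWC) dispersion problem in $P$ achieves a competitive ratio better than $2\ln 2$ ($\approx 1.386$).
   Context: Let $P\subset\mathbb{R}^k$ be a $k$-dimensional polytope with boundary $\partial P$; all distances $dis(\cdot,\cdot)$ are Euclidean. An instance is a sequence $S=((s_1,d_1),\dots,(s_n,d_n))$ of arrival and departure times with $s_i<d_i$ and $0=s_1\le s_2\le\dots\le s_n$; point $i$ is present at time $t$ iff $s_i\le t\le d_i$; $T=\max_i d_i$. For locations $X=(X_1,\dots,X_n)\in P^n$ and $t\le T$, let $d_{min}(t;X)=\min\{dis(X_i,\partial P),\ dis(X_i,X_j)\}$, the minimum taken over present points $i\neq j$ at time $t$. Let $OPT_A(S;P)=\max_{X}\min_{t\le T} d_{min}(t;X)$. In the online ATWC problem, an algorithm is notified of each arrival/departure event as it occurs and, when point $i$ arrives, must irrevocably choose $X_i\in P$ without knowing future events or the total number $n$ of points; the events are chosen by an adaptive adversary who knows the algorithm and sees its outputs so far. An online algorithm is $\sigma$-competitive (has competitive ratio $\sigma$) if for every instance $S$, $OPT_A(S;P)\le \sigma\cdot \min_{t\le T} d_{min}(t;X)$ where $X$ is the algorithm's output. *)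

theory Defs
  imports "HOL-Analysis.Analysis"
begin

text \<open>The polytope P = [0,1]. Points are indexed 0,...,n-1 (paper: 1,...,n).\<close>
definition P :: "real set" where "P = {0..1}"

definition valid_instance :: "nat \<Rightarrow> (nat \<Rightarrow> real) \<Rightarrow> (nat \<Rightarrow> real) \<Rightarrow> bool" where
  "valid_instance n s d \<longleftrightarrow> n \<ge> 1 \<and> s 0 = 0 \<and>
     (\<forall>i<n. s i < d i) \<and> (\<forall>i j. i \<le> j \<and> j < n \<longrightarrow> s i \<le> s j)"

definition Tmax :: "nat \<Rightarrow> (nat \<Rightarrow> real) \<Rightarrow> real" where
  "Tmax n d = Max (d ` {..<n})"

definition present :: "nat \<Rightarrow> (nat \<Rightarrow> real) \<Rightarrow> (nat \<Rightarrow> real) \<Rightarrow> real \<Rightarrow> nat set" where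
  "present n s d t = {i. i < n \<and> s i \<le> t \<and> t \<le> d i}"

definition dmin :: "nat \<Rightarrow> (nat \<Rightarrow> real) \<Rightarrow> (nat \<Rightarrow> real) \<Rightarrow> real \<Rightarrow> (nat \<Rightarrow> real) \<Rightarrow> real" where
  "dmin n s d t X = Min ({infdist (X i) (frontier P) | i. i \<in> present n s d t} \<union>
                         {dist (X i) (X j) | i j. i \<in> present n s d t \<and> j \<in> present n s d t \<and> i \<noteq> j})"

text \<open>min over t <= T of d_min(t;X) (times at which no point is present impose no constraint).\<close>
definition atwc_value :: "nat \<Rightarrow> (nat \<Rightarrow> real) \<Rightarrow> (nat \<Rightarrow> real) \<Rightarrow> (nat \<Rightarrow> real) \<Rightarrow> real" where
  "atwc_value n s d X = Inf {dmin n s d t X | t. t \<le> Tmax n d \<and> present n s d t \<noteq> {}}"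

definition OPT_A :: "nat \<Rightarrow> (nat \<Rightarrow> real) \<Rightarrow> (nat \<Rightarrow> real) \<Rightarrow> real" where
  "OPT_A n s d = Sup {atwc_value n s d X | X. \<forall>i<n. X i \<in> P}"

text \<open>A (deterministic) algorithm maps an instance (n, s, d) and an index i to the location
  of point i. It is online if the location of point i depends only on what has been revealed
  when point i arrives: the arrival times s_0..s_i, and for earlier points j < i whether they
  have already departed (d_j <= s_i), and if so when; not on n or on future events.\<close>
definition online_alg :: "(nat \<Rightarrow> (nat \<Rightarrow> real) \<Rightarrow> (nat \<Rightarrow> real) \<Rightarrow> nat \<Rightarrow> real) \<Rightarrow> bool" where
  "online_alg A \<longleftrightarrow>
     (\<forall>n s d. valid_instance n s d \<longrightarrow> (\<forall>i<n. A n s d i \<in> P)) \<and>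
     (\<forall>n s d n' s' d' i.
        valid_instance n s d \<and> valid_instance n' s' d' \<and> i < n \<and> i < n' \<and>
        (\<forall>j\<le>i. s j = s' j) \<and>
        (\<forall>j<i. (d j \<le> s i \<or> d' j \<le> s' i) \<longrightarrow> d j = d' j)
        \<longrightarrow> A n s d i = A n' s' d' i)"

definition competitive :: "(nat \<Rightarrow> (nat \<Rightarrow> real) \<Rightarrow> (nat \<Rightarrow> real) \<Rightarrow> nat \<Rightarrow> real) \<Rightarrow> real \<Rightarrow> bool" where
  "competitive A \<sigma> \<longleftrightarrow>
     (\<forall>n s d. valid_instance n s d \<longrightarrow> OPT_A n s d \<le> \<sigma> * atwc_value n s d (A n s d))"

end

theory Submission
  imports Defs
begin

text \<open>The adversary lets point \<open>i\<close> arrive at time \<open>i\<close> and stops after an arbitrary number \<open>n\<close>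
  of points, all of which then stay until time \<open>n\<close>. An online algorithm cannot tell these
  instances apart, so it places point \<open>i\<close> at a fixed location \<open>x\<^sub>i\<close>. Equally spaced points show
  that \<open>OPT\<close> is at least \<open>1/(n+1)\<close> for \<open>n\<close> points, so a \<open>\<sigma>\<close>-competitive algorithm keeps \<open>x\<^sub>i\<close>
  at distance at least \<open>b\<^sub>i = 1/(\<sigma>(i+2))\<close> from the boundary and from every earlier point.
  Now sort the first \<open>2K\<close> points: the \<open>2K+1\<close> gaps they leave in \<open>[0,1]\<close> sum to \<open>1\<close>, the gap
  between two neighbours is at least the smaller of their weights \<open>b\<close>, and every point bounds
  two gaps. Hence \<open>2 (b\<^sub>K + \<dots> + b\<^bsub>2K-1\<^esub>) \<le> 1\<close>, that is
  \<open>\<sigma> \<ge> 2 (1/(K+2) + \<dots> + 1/(2K+1)) \<ge> 2 ln 2 - 2/(K+1)\<close>.\<close>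

lemma min_ge_threshold_plus_deficits:
  fixes a b c :: real
  shows "c + min (a - c) 0 + min (b - c) 0 \<le> min a b"
  by linarith

lemma sum_gaps_lower_bound:
  fixes y F :: "nat \<Rightarrow> real"
  assumes gap: "\<And>p. p \<le> M \<Longrightarrow> c + F p + F (Suc p) \<le> y (Suc p) - y p"
    and "F 0 = 0" and "F (Suc M) = 0"
  shows "real (Suc M) * c + 2 * (\<Sum>p<M. F (Suc p)) \<le> y (Suc M) - y 0"
proof -
  have "(\<Sum>p<Suc M. F p) = (\<Sum>p<M. F (Suc p))"
    using \<open>F 0 = 0\<close> by (simp add: sum.lessThan_Suc_shift del: sum.lessThan_Suc)
  moreover have "(\<Sum>p<Suc M. F (Suc p)) = (\<Sum>p<M. F (Suc p))"
    using \<open>F (Suc M) = 0\<close> by simp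
  ultimately have "real (Suc M) * c + 2 * (\<Sum>p<M. F (Suc p)) = (\<Sum>p<Suc M. c + F p + F (Suc p))"
    by (simp add: sum.distrib)
  also have "\<dots> \<le> (\<Sum>p<Suc M. y (Suc p) - y p)"
    using gap by (intro sum_mono) auto
  also have "\<dots> = y (Suc M) - y 0"
    by (rule sum_lessThan_telescope)
  finally show ?thesis .
qed

text \<open>Each of the \<open>M + 1\<close> gaps between consecutive sorted points (and \<open>0\<close>, \<open>1\<close>) is at least
  \<open>c\<close> plus the deficits \<open>min (b\<^sub>k - c) 0\<close> of its endpoints, and every point is an endpoint of
  two gaps.\<close>

lemma spread_points_weight_bound:
  fixes x b :: "nat \<Rightarrow> real" and c :: real
  assumes "0 < M"
    and boundary: "\<And>i. i < M \<Longrightarrow> b i \<le> x i \<and> b i \<le> 1 - x i"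
    and pairs: "\<And>i j. i < M \<Longrightarrow> j < M \<Longrightarrow> i \<noteq> j \<Longrightarrow> min (b i) (b j) \<le> \<bar>x i - x j\<bar>"
  shows "real (Suc M) * c + 2 * (\<Sum>k<M. min (b k - c) 0) \<le> 1"
proof -
  define ord where "ord = sort_key x [0..<M]"
  define f where "f k = min (b k - c) 0" for k
  define y where "y p = (if p = 0 then 0 else if p \<le> M then x (ord ! (p - 1)) else 1)" for p
  define F where "F p = (if p = 0 \<or> M < p then 0 else f (ord ! (p - 1)))" for p
  have len: "length ord = M" and dist: "distinct ord" and set: "set ord = {..<M}"
    and sorted: "sorted (map x ord)"
    unfolding ord_def by auto
  have ord_lt: "ord ! q < M" if "q < M" for q
    using nth_mem[of q ord] that len set by auto
  have gap: "c + F p + F (Suc p) \<le> y (Suc p) - y p" if "p \<le> M" for p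
  proof -
    from \<open>p \<le> M\<close> consider "p = 0" | "p = M" | "0 < p" "p < M"
      by fastforce
    then show ?thesis
    proof cases
      case 1
      then show ?thesis
        using boundary[OF ord_lt[OF \<open>0 < M\<close>]] \<open>0 < M\<close> by (auto simp: y_def F_def f_def)
    next
      case 2
      then show ?thesis
        using boundary[OF ord_lt[of "M - 1"]] \<open>0 < M\<close> by (auto simp: y_def F_def f_def)
    next
      case 3
      define i j where "i = ord ! (p - 1)" and "j = ord ! p"
      have "i \<noteq> j"
        using 3 dist len by (simp add: i_def j_def nth_eq_iff_index_eq)
      moreover have "x i \<le> x j"
        using sorted_nth_mono[OF sorted, of "p - 1" p] 3 len by (simp add: i_def j_def)
      ultimately have "min (b i) (b j) \<le> x j - x i"
        using pairs[of i j] ord_lt 3 by (force simp: i_def j_def)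
      moreover have "y (Suc p) - y p = x j - x i" and "F p + F (Suc p) = f i + f j"
        using 3 by (simp_all add: y_def F_def i_def j_def)
      ultimately show ?thesis
        using min_ge_threshold_plus_deficits[of c "b i" "b j"] by (simp add: f_def)
    qed
  qed
  have "(\<Sum>p<M. F (Suc p)) = (\<Sum>q<M. f (ord ! q))"
    by (simp add: F_def)
  also have "\<dots> = (\<Sum>k<M. f k)"
    using sum.reindex_bij_betw[OF bij_betw_nth[OF dist _ refl], of "{..<M}" f] len set by simp
  finally have "(\<Sum>p<M. F (Suc p)) = (\<Sum>k<M. f k)" .
  with sum_gaps_lower_bound[of M c F y] gap show ?thesis
    by (simp add: F_def y_def f_def)
qed

lemma spread_points_antitone_weight_bound:
  fixes x b :: "nat \<Rightarrow> real"
  assumes "0 < K" and antitone: "\<And>i j. i \<le> j \<Longrightarrow> b j \<le> b i"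
    and boundary: "\<And>i. i < 2 * K \<Longrightarrow> b i \<le> x i \<and> b i \<le> 1 - x i"
    and pairs: "\<And>i j. i < 2 * K \<Longrightarrow> j < 2 * K \<Longrightarrow> i \<noteq> j \<Longrightarrow> b (max i j) \<le> \<bar>x i - x j\<bar>"
  shows "b K + 2 * (\<Sum>k\<in>{K..<2 * K}. b k) \<le> 1"
proof -
  have "min (b i) (b j) = b (max i j)" for i j
    using antitone[of i j] antitone[of j i] by (cases "i \<le> j") (auto simp: max_def min_def)
  then have bound: "real (Suc (2 * K)) * b K + 2 * (\<Sum>k<2 * K. min (b k - b K) 0) \<le> 1"
    using spread_points_weight_bound[of "2 * K" b x "b K"] assms by simp
  have "(\<Sum>k<K. min (b k - b K) 0) = 0"
    using antitone by (intro sum.neutral) auto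
  then have "(\<Sum>k<2 * K. min (b k - b K) 0) = (\<Sum>k\<in>{K..<2 * K}. min (b k - b K) 0)"
    using sum.atLeastLessThan_concat[of 0 K "2 * K" "\<lambda>k. min (b k - b K) 0"]
    by (simp add: lessThan_atLeast0)
  also have "\<dots> = (\<Sum>k\<in>{K..<2 * K}. b k - b K)"
    using antitone by (intro sum.cong) auto
  also have "\<dots> = (\<Sum>k\<in>{K..<2 * K}. b k) - real K * b K"
    by (simp add: sum_subtractf)
  finally show ?thesis
    using bound by (simp add: algebra_simps)
qed

lemma ln_add_diff_le_sum_inverse:
  fixes a :: real
  assumes "0 < a"
  shows "ln (a + real m) - ln a \<le> (\<Sum>j<m. 1 / (a + real j))"
proof (induction m)
  case (Suc m)
  let ?y = "a + real m"
  have "1 + 1 / ?y = (?y + 1) / ?y"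
    using assms by (simp add: field_simps)
  then have "ln (?y + 1) - ln ?y = ln (1 + 1 / ?y)"
    using assms by (simp add: ln_div)
  also have "\<dots> \<le> 1 / ?y"
    using assms by (intro ln_add_one_self_le_self) simp
  finally have "ln (?y + 1) - ln ?y \<le> 1 / ?y" .
  moreover have "ln (a + real (Suc m)) = ln (?y + 1)"
    by (simp add: algebra_simps)
  ultimately show ?case
    using Suc by simp
qed simp

lemma sum_inverse_block_ge_ln2:
  "ln 2 - 1 / (real K + 1) \<le> (\<Sum>k\<in>{K..<2 * K}. 1 / (real k + 2))"
proof -
  have "ln 2 + ln (real K + 1) = ln (real K + 2 + real K)"
    using ln_mult[of 2 "real K + 1"] by (simp add: algebra_simps)
  also have "\<dots> \<le> ln (real K + 2) + (\<Sum>j<K. 1 / (real K + 2 + real j))"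
    using ln_add_diff_le_sum_inverse[of "real K + 2" K] by simp
  also have "(\<Sum>j<K. 1 / (real K + 2 + real j)) = (\<Sum>k\<in>{K..<2 * K}. 1 / (real k + 2))"
    using sum.shift_bounds_nat_ivl[of "\<lambda>k. 1 / (real k + 2)" 0 K K]
    by (simp add: lessThan_atLeast0 mult_2 add_ac)
  finally have "ln 2 - (ln (real K + 2) - ln (real K + 1)) \<le> (\<Sum>k\<in>{K..<2 * K}. 1 / (real k + 2))"
    by simp
  moreover have "ln (real K + 2) - ln (real K + 1) \<le> 1 / (real K + 1)"
    using ln_add_diff_le_sum_inverse[of "real K + 1" 1] by (simp add: add.commute)
  ultimately show ?thesis
    by linarith
qed

lemma frontier_P: "frontier P = {0, 1}"
  unfolding P_def frontier_def by auto

lemma infdist_frontier_P: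
  assumes "u \<in> P"
  shows "infdist u (frontier P) = min u (1 - u)"
proof -
  have "frontier P = {0} \<union> {1}"
    using frontier_P by auto
  then have "infdist u (frontier P) = min (dist u 0) (dist u 1)"
    using infdist_Un_min[of "{0}" "{1}" u] by simp
  with assms show ?thesis
    by (simp add: P_def dist_real_def)
qed

lemma finite_dmin_candidates:
  "finite ({infdist (X i) (frontier P) | i. i \<in> present n s d t} \<union>
     {dist (X i) (X j) | i j. i \<in> present n s d t \<and> j \<in> present n s d t \<and> i \<noteq> j})"
proof -
  have "finite (present n s d t)"
    unfolding present_def by simp
  moreover have "{infdist (X i) (frontier P) | i. i \<in> present n s d t}
      = (\<lambda>i. infdist (X i) (frontier P)) ` present n s d t"
    by auto
  moreover have "{dist (X i) (X j) | i j. i \<in> present n s d t \<and> j \<in> present n s d t \<and> i \<noteq> j}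
      \<subseteq> (\<lambda>(i, j). dist (X i) (X j)) ` (present n s d t \<times> present n s d t)"
    by auto
  ultimately show ?thesis
    by (metis (no_types, lifting) finite_Un finite_SigmaI finite_imageI finite_subset)
qed

lemma dmin_le_infdist:
  "i \<in> present n s d t \<Longrightarrow> dmin n s d t X \<le> infdist (X i) (frontier P)"
  unfolding dmin_def by (rule Min_le[OF finite_dmin_candidates]) auto

lemma dmin_le_dist:
  "i \<in> present n s d t \<Longrightarrow> j \<in> present n s d t \<Longrightarrow> i \<noteq> j \<Longrightarrow> dmin n s d t X \<le> dist (X i) (X j)"
  unfolding dmin_def by (rule Min_le[OF finite_dmin_candidates]) blast

lemma le_dmin:
  assumes "present n s d t \<noteq> {}"
    and "\<And>i. i \<in> present n s d t \<Longrightarrow> c \<le> infdist (X i) (frontier P)"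
    and "\<And>i j. i \<in> present n s d t \<Longrightarrow> j \<in> present n s d t \<Longrightarrow> i \<noteq> j \<Longrightarrow> c \<le> dist (X i) (X j)"
  shows "c \<le> dmin n s d t X"
  unfolding dmin_def using assms by (subst Min_ge_iff[OF finite_dmin_candidates]) auto

lemma dmin_nonneg: "present n s d t \<noteq> {} \<Longrightarrow> 0 \<le> dmin n s d t X"
  by (rule le_dmin) (auto simp: infdist_nonneg)

lemma valid_instance_start:
  assumes "valid_instance n s d"
  shows "0 \<le> Tmax n d" and "0 \<in> present n s d 0"
proof -
  have "d 0 \<le> Tmax n d"
    using assms unfolding Tmax_def valid_instance_def by (intro Max_ge) auto
  with assms show "0 \<le> Tmax n d" and "0 \<in> present n s d 0"
    unfolding valid_instance_def present_def by force+
qed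

lemma atwc_value_le_dmin:
  assumes "t \<le> Tmax n d" and "present n s d t \<noteq> {}"
  shows "atwc_value n s d X \<le> dmin n s d t X"
  unfolding atwc_value_def
proof (rule cInf_lower)
  show "bdd_below {dmin n s d t X |t. t \<le> Tmax n d \<and> present n s d t \<noteq> {}}"
    by (rule bdd_belowI[of _ 0]) (auto intro: dmin_nonneg)
qed (use assms in blast)

lemma le_atwc_value:
  assumes "valid_instance n s d"
    and "\<And>t. t \<le> Tmax n d \<Longrightarrow> present n s d t \<noteq> {} \<Longrightarrow> c \<le> dmin n s d t X"
  shows "c \<le> atwc_value n s d X"
  unfolding atwc_value_def
proof (rule cInf_greatest)
  show "{dmin n s d t X |t. t \<le> Tmax n d \<and> present n s d t \<noteq> {}} \<noteq> {}"
    using valid_instance_start[OF assms(1)] by blast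
qed (use assms in auto)

lemma atwc_value_nonneg: "valid_instance n s d \<Longrightarrow> 0 \<le> atwc_value n s d X"
  by (rule le_atwc_value) (auto intro: dmin_nonneg)

lemma atwc_value_le_OPT_A:
  assumes valid: "valid_instance n s d" and X: "\<forall>i<n. X i \<in> P"
  shows "atwc_value n s d X \<le> OPT_A n s d"
  unfolding OPT_A_def
proof (rule cSup_upper)
  show "bdd_above {atwc_value n s d X |X. \<forall>i<n. X i \<in> P}"
  proof (rule bdd_aboveI[of _ 1], clarify)
    fix Y assume Y: "\<forall>i<n. Y i \<in> P"
    have "0 < n"
      using valid unfolding valid_instance_def by auto
    have "atwc_value n s d Y \<le> dmin n s d 0 Y"
      using valid_instance_start[OF valid] by (intro atwc_value_le_dmin) auto
    also have "\<dots> \<le> infdist (Y 0) (frontier P)"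
      using valid_instance_start(2)[OF valid] by (rule dmin_le_infdist)
    also have "\<dots> \<le> 1"
      using Y \<open>0 < n\<close> infdist_frontier_P[of "Y 0"] by (simp add: P_def)
    finally show "atwc_value n s d Y \<le> 1" .
  qed
qed (use X in blast)

text \<open>Witness: the equally spaced configuration \<open>X\<^sub>i = (i+1)/(n+1)\<close>.\<close>

lemma OPT_A_ge_inverse:
  assumes valid: "valid_instance n s d"
  shows "1 / (real n + 1) \<le> OPT_A n s d"
proof -
  define X where "X i = (real i + 1) / (real n + 1)" for i
  have XP: "\<forall>i<n. X i \<in> P"
    unfolding X_def P_def by (auto simp: field_simps)
  have "1 / (real n + 1) \<le> dmin n s d t X" if "present n s d t \<noteq> {}" for t
  proof (rule le_dmin[OF that])
    fix i assume "i \<in> present n s d t"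
    then have "i < n"
      unfolding present_def by auto
    then show "1 / (real n + 1) \<le> infdist (X i) (frontier P)"
      using XP by (simp add: infdist_frontier_P X_def divide_right_mono field_simps)
  next
    fix i j :: nat assume "i \<noteq> j"
    then have "1 \<le> \<bar>real i - real j\<bar>"
      by linarith
    moreover have "dist (X i) (X j) = \<bar>real i - real j\<bar> / (real n + 1)"
      unfolding X_def dist_real_def by (simp add: diff_divide_distrib[symmetric] abs_divide)
    ultimately show "1 / (real n + 1) \<le> dist (X i) (X j)"
      by (simp add: divide_right_mono)
  qed
  then have "1 / (real n + 1) \<le> atwc_value n s d X"
    by (intro le_atwc_value[OF valid])
  also have "\<dots> \<le> OPT_A n s d"
    by (rule atwc_value_le_OPT_A[OF valid XP])
  finally show ?thesis .
qed

lemma competitive_ratio_pos: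
  assumes "competitive A \<sigma>"
  shows "0 < \<sigma>"
proof (rule ccontr)
  have valid: "valid_instance 1 real (\<lambda>_. 1)"
    unfolding valid_instance_def by simp
  assume "\<not> 0 < \<sigma>"
  then have "\<sigma> * atwc_value 1 real (\<lambda>_. 1) (A 1 real (\<lambda>_. 1)) \<le> 0"
    using atwc_value_nonneg[OF valid] by (simp add: mult_nonpos_nonneg)
  moreover have "1 / 2 \<le> OPT_A 1 real (\<lambda>_. 1)"
    using OPT_A_ge_inverse[OF valid] by simp
  ultimately show False
    using assms valid unfolding competitive_def by fastforce
qed

lemma valid_staircase: "0 < n \<Longrightarrow> valid_instance n real (\<lambda>_. real n)"
  unfolding valid_instance_def by auto

lemma staircase_atwc_value_le_dmin:
  assumes "0 < n"
  shows "atwc_value n real (\<lambda>_. real n) X \<le> dmin n real (\<lambda>_. real n) (real n) X"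
proof (rule atwc_value_le_dmin)
  have "(\<lambda>_. real n) ` {..<n} = {real n}"
    using assms by auto
  then show "real n \<le> Tmax n (\<lambda>_. real n)"
    unfolding Tmax_def by simp
  show "present n real (\<lambda>_. real n) (real n) \<noteq> {}"
    using assms unfolding present_def by auto
qed

lemma staircase_present: "i < n \<Longrightarrow> i \<in> present n real (\<lambda>_. real n) (real n)"
  unfolding present_def by simp

lemma competitive_staircase_value:
  assumes "competitive A \<sigma>" and "0 < n"
  shows "1 / (\<sigma> * (real n + 1)) \<le> atwc_value n real (\<lambda>_. real n) (A n real (\<lambda>_. real n))"
proof -
  have "1 / (real n + 1) \<le> \<sigma> * atwc_value n real (\<lambda>_. real n) (A n real (\<lambda>_. real n))"
    using OPT_A_ge_inverse[OF valid_staircase] valid_staircase assms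
    unfolding competitive_def by (meson order_trans)
  then have "1 / (real n + 1) / \<sigma> \<le> \<sigma> * atwc_value n real (\<lambda>_. real n) (A n real (\<lambda>_. real n)) / \<sigma>"
    using competitive_ratio_pos[OF assms(1)] by (intro divide_right_mono) auto
  then show ?thesis
    using competitive_ratio_pos[OF assms(1)] by (simp add: mult.commute)
qed

definition staircase_position ::
    "(nat \<Rightarrow> (nat \<Rightarrow> real) \<Rightarrow> (nat \<Rightarrow> real) \<Rightarrow> nat \<Rightarrow> real) \<Rightarrow> nat \<Rightarrow> real" where
  "staircase_position A i = A (Suc i) real (\<lambda>_. real (Suc i)) i"

lemma online_staircase_position:
  assumes "online_alg A" and "i < n"
  shows "A n real (\<lambda>_. real n) i = staircase_position A i"
proof -
  have "\<not> real n \<le> real i" and "\<not> real (Suc i) \<le> real i"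
    using assms(2) by auto
  with assms valid_staircase[of n] valid_staircase[of "Suc i"] show ?thesis
    unfolding online_alg_def staircase_position_def by auto
qed

lemma staircase_position_in_P: "online_alg A \<Longrightarrow> staircase_position A i \<in> P"
  using valid_staircase[of "Suc i"] unfolding online_alg_def staircase_position_def by blast

lemma staircase_positions_separated:
  assumes online: "online_alg A" and comp: "competitive A \<sigma>"
  shows "1 / (\<sigma> * (real i + 2)) \<le> min (staircase_position A i) (1 - staircase_position A i)"
    and "i \<noteq> j \<Longrightarrow>
      1 / (\<sigma> * (real (max i j) + 2)) \<le> \<bar>staircase_position A i - staircase_position A j\<bar>"
proof -
  define V where "V n = atwc_value n real (\<lambda>_. real n) (A n real (\<lambda>_. real n))" for n
  have V: "1 / (\<sigma> * (real m + 2)) \<le> V (Suc m)" for m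
    using competitive_staircase_value[OF comp, of "Suc m"] by (simp add: V_def add.commute)
  have "V (Suc i) \<le> infdist (staircase_position A i) (frontier P)"
    unfolding V_def staircase_position_def
    by (rule order_trans[OF staircase_atwc_value_le_dmin dmin_le_infdist[OF staircase_present]]) simp_all
  then show "1 / (\<sigma> * (real i + 2)) \<le> min (staircase_position A i) (1 - staircase_position A i)"
    using V[of i] infdist_frontier_P[OF staircase_position_in_P[OF online]] by simp
  assume "i \<noteq> j"
  define m where "m = max i j"
  have "i < Suc m" and "j < Suc m"
    by (simp_all add: m_def)
  then have "V (Suc m) \<le> dist (A (Suc m) real (\<lambda>_. real (Suc m)) i) (A (Suc m) real (\<lambda>_. real (Suc m)) j)"
    unfolding V_def
    by (intro order_trans[OF staircase_atwc_value_le_dmin dmin_le_dist[OF staircase_present staircase_present]])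
      (use \<open>i \<noteq> j\<close> in simp_all)
  also have "\<dots> = dist (staircase_position A i) (staircase_position A j)"
    by (simp only: online_staircase_position[OF online \<open>i < Suc m\<close>]
        online_staircase_position[OF online \<open>j < Suc m\<close>])
  finally have "V (Suc m) \<le> dist (staircase_position A i) (staircase_position A j)" .
  then show "1 / (\<sigma> * (real (max i j) + 2)) \<le> \<bar>staircase_position A i - staircase_position A j\<bar>"
    using V[of m] by (simp add: m_def dist_real_def)
qed

lemma competitive_ratio_ge_block_sum:
  assumes online: "online_alg A" and comp: "competitive A \<sigma>" and "0 < K"
  shows "2 * (\<Sum>k\<in>{K..<2 * K}. 1 / (real k + 2)) \<le> \<sigma>"
proof -
  have "0 < \<sigma>"
    by (rule competitive_ratio_pos[OF comp])
  define b where "b k = 1 / (\<sigma> * (real k + 2))" for k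
  have "b K + 2 * (\<Sum>k\<in>{K..<2 * K}. b k) \<le> 1"
  proof (rule spread_points_antitone_weight_bound[OF \<open>0 < K\<close>, where x = "staircase_position A"])
    show "b j \<le> b i" if "i \<le> j" for i j
      using \<open>0 < \<sigma>\<close> that unfolding b_def by (simp add: frac_le mult_left_mono)
  qed (use staircase_positions_separated[OF online comp] in \<open>auto simp: b_def\<close>)
  moreover have "0 < b K"
    using \<open>0 < \<sigma>\<close> by (simp add: b_def)
  ultimately have "\<sigma> * (2 * (\<Sum>k\<in>{K..<2 * K}. b k)) \<le> \<sigma>"
    using \<open>0 < \<sigma>\<close> by (intro mult_left_le) auto
  moreover have "\<sigma> * (\<Sum>k\<in>{K..<2 * K}. b k) = (\<Sum>k\<in>{K..<2 * K}. 1 / (real k + 2))"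
    using \<open>0 < \<sigma>\<close> unfolding b_def sum_distrib_left by simp
  ultimately show ?thesis
    by (simp add: mult.left_commute)
qed

theorem theorem1:
  assumes "online_alg A" and "competitive A \<sigma>"
  shows "\<sigma> \<ge> 2 * ln 2"
proof -
  have "ln 2 \<le> \<sigma> / 2 + inverse (real (Suc K))" if "1 \<le> K" for K
    using sum_inverse_block_ge_ln2[of K] competitive_ratio_ge_block_sum[OF assms, of K] that
    by (simp add: inverse_eq_divide add.commute)
  then have "ln 2 \<le> \<sigma> / 2"
    by (intro LIMSEQ_le_const[OF LIMSEQ_inverse_real_of_nat_add]) blast
  then show ?thesis
    by simp
qed

end
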